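(* Let $N$ be a society, $D$ an $N$-coalition, $\nabla$ an ES basic fusion operator satisfying (ESF-SD), (ESF-P) and (ESF-I), and $w\ne w'$ interpretations. Suppose $E_{w,w'},E_{w'}\in\mathcal E$ satisfy $[\![B(E_{w,w'})]\!]=\{w,w'\}$, $[\![B(E_{w'})]\!]=\{w'\}$, and $D$ is locally decisive for $E_{w,w'}$ against $E_{w'}$. Then for every interpretation $w''\notin\{w,w'\}$ and every $E_{w',w''}\in\mathcal E$ with $[\![B(E_{w',w''})]\!]=\{w',w''\}$, $D$ is decisive for $E_{w',w''}$ against $E_{w'}$.
   Context: Setting: epistemic space $(\mathcal E,B,\mathcal L_{\mathcal P})$ ($\mathcal E$ nonempty, $B:\mathcal E\to$ propositional formulas over finite $\mathcal P$, $|\mathcal P|\ge2$, image modulo equivalence exactly the consistent formulas; $[\![\phi]\!]$ models; $\varphi_M$ a formula with models exactly $M$); agents: well-ordered set $\mathcal S$; society: nonempty finite $N\subseteq\mathcal S$; $N$-profile $\Phi:N\to\mathcal E$, $E_i=\Phi(i)$, identified with $E_i$ if $N=\{i\}$; profiles on $\{i_1<\dots<i_n\}$, $\{j_1<\dots<j_m\}$ equivalent if $n=m$ and entries coincide position-wise. ES basic fusion operator: a map $\nabla(\Phi,E)\in\mathcal E$ with (ESF1) $B(\nabla(\Phi,E))\vdash B(E)$; (ESF2) equivalent profiles and $B(E)\equiv B(E')$ give equivalent $B(\nabla)$; (ESF3) if $B(E)\equiv B(E')\wedge B(E'')$ then $B(\nabla(\Phi,E'))\wedge B(E'')\vdash B(\nabla(\Phi,E))$;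 (ESF4) if moreover $B(\nabla(\Phi,E'))\wedge B(E'')\nvdash\bot$ then $B(\nabla(\Phi,E))\vdash B(\nabla(\Phi,E'))\wedge B(E'')$. (ESF-SD): for every agent $i$, interpretations $w_1,w_2,w_3$ and $E_{w_1,w_2},E_{w_2,w_3}$ with $[\![B(E_{w_1,w_2})]\!]=\{w_1,w_2\}$, $[\![B(E_{w_2,w_3})]\!]=\{w_2,w_3\}$, there exist $i$-profiles realising each of: (i) $B(\nabla(E_i,E_{w_1,w_2}))\equiv\varphi_{w_1,w_2}$ and $B(\nabla(E_i,E_{w_2,w_3}))\equiv\varphi_{w_2,w_3}$; (ii) $\equiv\varphi_{w_1,w_2}$ and $\equiv\varphi_{w_2}$; (iii) $\equiv\varphi_{w_1}$ and $\equiv\varphi_{w_2,w_3}$; (iv) $\equiv\varphi_{w_1}$ and $\equiv\varphi_{w_2}$. (ESF-P): for every $N$, $N$-profile $\Phi$, $E,E'$: if $\bigwedge_{i\in N}B(\nabla(E_i,E))\nvdash\bot$ and $B(\nabla(E_i,E))\wedge B(E')\vdash\bot$ for all $i\in N$ then $B(\nabla(\Phi,E))\wedge B(E')\vdash\bot$. (ESF-I): for every $N$, $N$-profiles $\Phi,\Phi'$, $E$: if for every $E'$ with $B(E')\vdash B(E)$, $B(\nabla(E_j,E'))\equiv B(\nabla(E'_j,E'))$ for all $j\in N$, then $B(\nabla(\Phi,E))\equiv B(\nabla(\Phi',E))$. An $N$-coalition is a subset $D\subseteq N$. $D$ is locally decisive for $E$ against $E'$ if for every $N$-profile $\Phi$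 with (i) $B(\nabla(E_i,E))\wedge B(E')\vdash\bot$ for all $i\in D$, (ii) $B(\nabla(E_j,E))\equiv B(E')$ for all $j\in N\setminus D$, (iii) $\bigwedge_{i\in D}B(\nabla(E_i,E))\nvdash\bot$, we have $B(\nabla(\Phi,E))\wedge B(E')\vdash\bot$. $D$ is decisive for $E$ against $E'$ if the same conclusion holds for every $N$-profile satisfying only (i) and (iii). *)

theory Defs
  imports Main "HOL-Library.FuncSet"
begin

datatype 'p form = Atom 'p | Bot | Top | Neg "'p form" | And "'p form" "'p form"
  | Or "'p form" "'p form" | Imp "'p form" "'p form"

fun sat :: "'p set \<Rightarrow> 'p form \<Rightarrow> bool" where
  "sat w (Atom p) = (p \<in> w)"
| "sat w Bot = False"
| "sat w Top = True"
| "sat w (Neg f) = (\<not> sat w f)"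
| "sat w (And f g) = (sat w f \<and> sat w g)"
| "sat w (Or f g) = (sat w f \<or> sat w g)"
| "sat w (Imp f g) = (sat w f \<longrightarrow> sat w g)"

definition models :: "'p form \<Rightarrow> 'p set set" where
  "models f = {w. sat w f}"

definition entails :: "'p form \<Rightarrow> 'p form \<Rightarrow> bool" (infix "\<turnstile>" 55) where
  "f \<turnstile> g \<longleftrightarrow> models f \<subseteq> models g"

definition fequiv :: "'p form \<Rightarrow> 'p form \<Rightarrow> bool" (infix "\<equiv>\<^sub>F" 55) where
  "f \<equiv>\<^sub>F g \<longleftrightarrow> models f = models g"

definition conj_consistent :: "'i set \<Rightarrow> ('i \<Rightarrow> 'p form) \<Rightarrow> bool" where
  "conj_consistent I f \<longleftrightarrow> (\<exists>w. \<forall>i\<in>I. sat w (f i))"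

definition epistemic_space :: "('e \<Rightarrow> 'p form) \<Rightarrow> bool" where
  "epistemic_space B \<longleftrightarrow> (\<forall>E. \<not> (B E \<turnstile> Bot)) \<and> (\<forall>f. \<not> (f \<turnstile> Bot) \<longrightarrow> (\<exists>E. B E \<equiv>\<^sub>F f))"

definition society :: "'s set \<Rightarrow> bool" where
  "society N \<longleftrightarrow> finite N \<and> N \<noteq> {}"

definition profile :: "'s set \<Rightarrow> ('s \<Rightarrow> 'e) \<Rightarrow> bool" where
  "profile N \<Phi> \<longleftrightarrow> \<Phi> \<in> extensional N"

text \<open>The {i}-profile identified with E.\<close>
definition single :: "'s \<Rightarrow> 'e \<Rightarrow> ('s \<Rightarrow> 'e)" where
  "single i E = restrict (\<lambda>_. E) {i}"

definition profile_equiv :: "'s::linorder set \<Rightarrow> ('s \<Rightarrow> 'e) \<Rightarrow> 's set \<Rightarrow> ('s \<Rightarrow> 'e) \<Rightarrow> bool" where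
  "profile_equiv N \<Phi> M \<Psi> \<longleftrightarrow>
     map \<Phi> (sorted_list_of_set N) = map \<Psi> (sorted_list_of_set M)"

type_synonym ('s, 'e) fusion = "'s set \<Rightarrow> ('s \<Rightarrow> 'e) \<Rightarrow> 'e \<Rightarrow> 'e"

definition ES_basic_fusion :: "('e \<Rightarrow> 'p form) \<Rightarrow> ('s::wellorder, 'e) fusion \<Rightarrow> bool" where
  "ES_basic_fusion B nabla \<longleftrightarrow>
    (\<forall>N \<Phi> E. society N \<and> profile N \<Phi> \<longrightarrow> B (nabla N \<Phi> E) \<turnstile> B E) \<and>
    (\<forall>N \<Phi> M \<Psi> E E'. society N \<and> profile N \<Phi> \<and> society M \<and> profile M \<Psi> \<and>
        profile_equiv N \<Phi> M \<Psi> \<and> B E \<equiv>\<^sub>F B E' \<longrightarrow> B (nabla N \<Phi> E) \<equiv>\<^sub>F B (nabla M \<Psi> E')) \<and>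
    (\<forall>N \<Phi> E E' E''. society N \<and> profile N \<Phi> \<and> B E \<equiv>\<^sub>F And (B E') (B E'') \<longrightarrow>
        And (B (nabla N \<Phi> E')) (B E'') \<turnstile> B (nabla N \<Phi> E)) \<and>
    (\<forall>N \<Phi> E E' E''. society N \<and> profile N \<Phi> \<and> B E \<equiv>\<^sub>F And (B E') (B E'') \<and>
        \<not> (And (B (nabla N \<Phi> E')) (B E'') \<turnstile> Bot) \<longrightarrow>
        B (nabla N \<Phi> E) \<turnstile> And (B (nabla N \<Phi> E')) (B E''))"

definition ESF_SD :: "('e \<Rightarrow> 'p form) \<Rightarrow> ('s, 'e) fusion \<Rightarrow> bool" where
  "ESF_SD B nabla \<longleftrightarrow>
    (\<forall>i w1 w2 w3 E12 E23. w1 \<noteq> w2 \<and> w2 \<noteq> w3 \<and> w1 \<noteq> w3 \<and>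
       models (B E12) = {w1, w2} \<and> models (B E23) = {w2, w3} \<longrightarrow>
       (\<exists>Ei. models (B (nabla {i} (single i Ei) E12)) = {w1, w2} \<and>
             models (B (nabla {i} (single i Ei) E23)) = {w2, w3}) \<and>
       (\<exists>Ei. models (B (nabla {i} (single i Ei) E12)) = {w1, w2} \<and>
             models (B (nabla {i} (single i Ei) E23)) = {w2}) \<and>
       (\<exists>Ei. models (B (nabla {i} (single i Ei) E12)) = {w1} \<and>
             models (B (nabla {i} (single i Ei) E23)) = {w2, w3}) \<and>
       (\<exists>Ei. models (B (nabla {i} (single i Ei) E12)) = {w1} \<and>
             models (B (nabla {i} (single i Ei) E23)) = {w2}))"

definition ESF_P :: "('e \<Rightarrow> 'p form) \<Rightarrow> ('s, 'e) fusion \<Rightarrow> bool" where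
  "ESF_P B nabla \<longleftrightarrow>
    (\<forall>N \<Phi> E E'. society N \<and> profile N \<Phi> \<and>
       conj_consistent N (\<lambda>i. B (nabla {i} (single i (\<Phi> i)) E)) \<and>
       (\<forall>i\<in>N. And (B (nabla {i} (single i (\<Phi> i)) E)) (B E') \<turnstile> Bot) \<longrightarrow>
       And (B (nabla N \<Phi> E)) (B E') \<turnstile> Bot)"

definition ESF_I :: "('e \<Rightarrow> 'p form) \<Rightarrow> ('s, 'e) fusion \<Rightarrow> bool" where
  "ESF_I B nabla \<longleftrightarrow>
    (\<forall>N \<Phi> \<Psi> E. society N \<and> profile N \<Phi> \<and> profile N \<Psi> \<and>
       (\<forall>E'. B E' \<turnstile> B E \<longrightarrow>
          (\<forall>j\<in>N. B (nabla {j} (single j (\<Phi> j)) E') \<equiv>\<^sub>F B (nabla {j} (single j (\<Psi> j)) E'))) \<longrightarrow>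
       B (nabla N \<Phi> E) \<equiv>\<^sub>F B (nabla N \<Psi> E))"

definition locally_decisive ::
  "('e \<Rightarrow> 'p form) \<Rightarrow> ('s, 'e) fusion \<Rightarrow> 's set \<Rightarrow> 's set \<Rightarrow> 'e \<Rightarrow> 'e \<Rightarrow> bool" where
  "locally_decisive B nabla N D E E' \<longleftrightarrow>
    (\<forall>\<Phi>. profile N \<Phi> \<and>
       (\<forall>i\<in>D. And (B (nabla {i} (single i (\<Phi> i)) E)) (B E') \<turnstile> Bot) \<and>
       (\<forall>j\<in>N - D. B (nabla {j} (single j (\<Phi> j)) E) \<equiv>\<^sub>F B E') \<and>
       conj_consistent D (\<lambda>i. B (nabla {i} (single i (\<Phi> i)) E)) \<longrightarrow>
       And (B (nabla N \<Phi> E)) (B E') \<turnstile> Bot)"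

definition decisive ::
  "('e \<Rightarrow> 'p form) \<Rightarrow> ('s, 'e) fusion \<Rightarrow> 's set \<Rightarrow> 's set \<Rightarrow> 'e \<Rightarrow> 'e \<Rightarrow> bool" where
  "decisive B nabla N D E E' \<longleftrightarrow>
    (\<forall>\<Phi>. profile N \<Phi> \<and>
       (\<forall>i\<in>D. And (B (nabla {i} (single i (\<Phi> i)) E)) (B E') \<turnstile> Bot) \<and>
       conj_consistent D (\<lambda>i. B (nabla {i} (single i (\<Phi> i)) E)) \<longrightarrow>
       And (B (nabla N \<Phi> E)) (B E') \<turnstile> Bot)"

end

theory Submission
  imports Defs
begin

text \<open>Fix the society's outcome on \<open>E\<close>, whose two worlds are \<open>w'\<close> and \<open>w''\<close>, and a third world \<open>w\<close>.
  Using (ESF-SD) every agent can be given a new input that keeps its ranking of \<open>w', w''\<close> but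
  puts \<open>w''\<close> strictly above \<open>w\<close>, and \<open>w\<close> above \<open>w'\<close> exactly for the members of \<open>D\<close>.
  On this new profile local decisiveness forces the society to prefer \<open>w\<close> to \<open>w'\<close>, and Pareto
  forces it to prefer \<open>w''\<close> to \<open>w\<close>; since (ESF3)/(ESF4) make all outcomes restrictions of the
  outcome on \<open>{w, w', w''}\<close>, the society prefers \<open>w''\<close> to \<open>w'\<close>. By (ESF-I) the outcome on \<open>E\<close>
  is the same for the original profile.\<close>

lemma models_And [simp]: "models (And f g) = models f \<inter> models g"
  by (auto simp: models_def)

lemma entails_Bot_iff: "f \<turnstile> Bot \<longleftrightarrow> models f = {}"
  by (auto simp: entails_def models_def)

lemma society_singleton: "society {j}"
  by (simp add: society_def)

lemma profile_single: "profile {j} (single j X)"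
  by (simp add: profile_def single_def)

lemma profile_choice:
  assumes "\<forall>j\<in>N. \<exists>X. P j X"
  shows "\<exists>\<Phi>. profile N \<Phi> \<and> (\<forall>j\<in>N. P j (\<Phi> j))"
proof -
  have "P j (SOME X. P j X)" if "j \<in> N" for j
    using assms that by (blast intro: someI_ex)
  then show ?thesis
    by (intro exI[of _ "restrict (\<lambda>j. SOME X. P j X) N"]) (simp add: profile_def)
qed

definition char_form :: "'p set \<Rightarrow> 'p list \<Rightarrow> 'p form" where
  "char_form w xs = foldr (\<lambda>p f. And (if p \<in> w then Atom p else Neg (Atom p)) f) xs Top"

definition char_forms_disj :: "'p set list \<Rightarrow> 'p list \<Rightarrow> 'p form" where
  "char_forms_disj ws xs = foldr (\<lambda>w f. Or (char_form w xs) f) ws Bot"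

lemma sat_char_form: "sat v (char_form w xs) \<longleftrightarrow> (\<forall>p\<in>set xs. p \<in> v \<longleftrightarrow> p \<in> w)"
  by (induction xs) (auto simp: char_form_def)

lemma sat_char_forms_disj:
  "sat v (char_forms_disj ws xs) \<longleftrightarrow> (\<exists>w\<in>set ws. \<forall>p\<in>set xs. p \<in> v \<longleftrightarrow> p \<in> w)"
  by (induction ws) (auto simp: char_forms_disj_def sat_char_form)

lemma models_surj: "\<exists>f. models f = (M :: 'p::finite set set)"
proof -
  obtain ws where ws: "set ws = M" using finite_list[OF finite] by blast
  obtain xs :: "'p list" where xs: "set xs = UNIV" using finite_list[OF finite] by blast
  have "(\<forall>p\<in>set xs. p \<in> v \<longleftrightarrow> p \<in> w) \<longleftrightarrow> v = w" for v w :: "'p set"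
    using xs by auto
  then have "models (char_forms_disj ws xs) = M"
    using ws by (simp add: models_def sat_char_forms_disj)
  then show ?thesis ..
qed

lemma epistemic_space_models_surj:
  fixes B :: "'e \<Rightarrow> 'p::finite form"
  assumes "epistemic_space B" "M \<noteq> {}"
  obtains E where "models (B E) = M"
proof -
  obtain f where f: "models f = M" using models_surj by blast
  then obtain E where "B E \<equiv>\<^sub>F f"
    using assms by (auto simp: epistemic_space_def entails_Bot_iff)
  then show ?thesis using f that by (simp add: fequiv_def)
qed

locale es_fusion =
  fixes B :: "'e \<Rightarrow> 'p::finite form" and nabla :: "('s::wellorder, 'e) fusion"
  assumes epistemic: "epistemic_space B" and basic: "ES_basic_fusion B nabla"
begin

abbreviation individual :: "'s \<Rightarrow> 'e \<Rightarrow> 'e \<Rightarrow> 'e" where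
  "individual j X E \<equiv> nabla {j} (single j X) E"

lemma models_nonempty: "models (B E) \<noteq> {}"
  using epistemic by (auto simp: epistemic_space_def entails_Bot_iff)

lemma fusion_models_subset:
  "society N \<Longrightarrow> profile N \<Phi> \<Longrightarrow> models (B (nabla N \<Phi> E)) \<subseteq> models (B E)"
  using basic by (auto simp: ES_basic_fusion_def entails_def)

lemma fusion_models_singleton:
  assumes "society N" "profile N \<Phi>" "models (B E) = {x}"
  shows "models (B (nabla N \<Phi> E)) = {x}"
  using fusion_models_subset[OF assms(1,2), of E] models_nonempty[of "nabla N \<Phi> E"] assms(3)
  by auto

lemma fusion_models_pair_cases:
  assumes "society N" "profile N \<Phi>" "models (B E) = {a, b}"
  shows "models (B (nabla N \<Phi> E)) \<in> {{a}, {b}, {a, b}}"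
proof -
  let ?S = "models (B (nabla N \<Phi> E))"
  have "?S \<subseteq> {a, b}" "?S \<noteq> {}"
    using fusion_models_subset[OF assms(1,2), of E] models_nonempty[of "nabla N \<Phi> E"] assms(3)
  by auto
  then show ?thesis by (cases "a \<in> ?S"; cases "b \<in> ?S") auto
qed

lemma fusion_models_restrict:
  assumes "society N" "profile N \<Phi>"
    and sub: "models (B E) \<subseteq> models (B E')"
    and meet: "models (B (nabla N \<Phi> E')) \<inter> models (B E) \<noteq> {}"
  shows "models (B (nabla N \<Phi> E)) = models (B (nabla N \<Phi> E')) \<inter> models (B E)"
proof -
  have eq: "B E \<equiv>\<^sub>F And (B E') (B E)" using sub by (auto simp: fequiv_def)
  moreover have "\<not> (And (B (nabla N \<Phi> E')) (B E) \<turnstile> Bot)"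
    using meet by (simp add: entails_Bot_iff)
  ultimately have "And (B (nabla N \<Phi> E')) (B E) \<turnstile> B (nabla N \<Phi> E)"
      "B (nabla N \<Phi> E) \<turnstile> And (B (nabla N \<Phi> E')) (B E)"
    using basic assms(1,2) unfolding ES_basic_fusion_def by blast+
  then show ?thesis by (auto simp: entails_def)
qed

lemma fusion_models_transitive:
  assumes "society N" "profile N \<Phi>" and distinct: "a \<noteq> b" "b \<noteq> c" "a \<noteq> c"
    and Eab: "models (B Eab) = {a, b}" and Ebc: "models (B Ebc) = {b, c}"
    and Eac: "models (B Eac) = {a, c}"
    and ab: "models (B (nabla N \<Phi> Eab)) \<in> {{a}, {a, b}}"
    and bc: "models (B (nabla N \<Phi> Ebc)) = {b}"
  shows "models (B (nabla N \<Phi> Eac)) = {a}"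
proof -
  obtain E3 where E3: "models (B E3) = {a, b, c}"
    using epistemic_space_models_surj[OF epistemic, of "{a, b, c}"] by auto
  let ?S = "models (B (nabla N \<Phi> E3))"
  have S: "?S \<subseteq> {a, b, c}" "?S \<noteq> {}"
    using fusion_models_subset[OF assms(1,2), of E3] E3 models_nonempty[of "nabla N \<Phi> E3"]
    by auto
  have restrict: "models (B (nabla N \<Phi> E)) = ?S \<inter> models (B E)"
    if "models (B E) \<subseteq> {a, b, c}" "?S \<inter> models (B E) \<noteq> {}" for E
    using fusion_models_restrict[OF assms(1,2)] that E3 by simp
  have "c \<notin> ?S"
  proof
    assume "c \<in> ?S"
    then have "models (B (nabla N \<Phi> Ebc)) = ?S \<inter> {b, c}"
      using restrict[of Ebc] Ebc by auto
    then show False using bc \<open>c \<in> ?S\<close> distinct by auto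
  qed
  then have "models (B (nabla N \<Phi> Eab)) = ?S \<inter> {a, b}"
    using restrict[of Eab] Eab S by auto
  then have "a \<in> ?S"
    using ab distinct by auto
  then have "models (B (nabla N \<Phi> Eac)) = ?S \<inter> {a, c}"
    using restrict[of Eac] Eac by auto
  then show ?thesis
    using \<open>a \<in> ?S\<close> \<open>c \<notin> ?S\<close> by auto
qed

lemma SD_ranking:
  assumes SD: "ESF_SD B nabla" and distinct: "a \<noteq> b" "b \<noteq> c" "a \<noteq> c"
    and Eab: "models (B Eab) = {a, b}" and Ebc: "models (B Ebc) = {b, c}"
    and Eac: "models (B Eac) = {a, c}"
    and X: "X \<in> {{a}, {a, b}}"
  shows "\<exists>Y. models (B (individual i Y Eab)) = X \<and> models (B (individual i Y Ebc)) = {b}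
    \<and> models (B (individual i Y Eac)) = {a}"
proof -
  have "\<exists>Y. models (B (individual i Y Eab)) = X \<and> models (B (individual i Y Ebc)) = {b}"
    using SD distinct Eab Ebc X unfolding ESF_SD_def by blast
  then show ?thesis
    using fusion_models_transitive[OF society_singleton profile_single distinct Eab Ebc Eac] X
    by auto
qed

lemma SD_agent_extension:
  assumes SD: "ESF_SD B nabla" and distinct: "w \<noteq> w'" "w'' \<noteq> w" "w'' \<noteq> w'"
    and E: "models (B E) = {w', w''}" and Eww': "models (B Eww') = {w, w'}"
    and Ew''w: "models (B Ew''w) = {w'', w}"
    and T: "T \<in> {{w'}, {w''}, {w', w''}}" and dT: "d \<Longrightarrow> T = {w''}"
  shows "\<exists>Y. models (B (individual j Y E)) = T \<and> models (B (individual j Y Ew''w)) = {w''}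
    \<and> models (B (individual j Y Eww')) = (if d then {w} else {w'})"
proof -
  have E': "models (B E) = {w'', w'}" and Eww'': "models (B Eww') = {w', w}"
    using E Eww' by (simp_all add: insert_commute)
  txt \<open>The three cases are the rankings \<open>w'' \<succ> w \<succ> w'\<close>, \<open>w'' \<succ> w' \<succ> w\<close> and
    \<open>w' \<succeq> w'' \<succ> w\<close>.\<close>
  consider "d" | "\<not> d" "T = {w''}" | "\<not> d" "T \<in> {{w'}, {w', w''}}"
    using dT T by blast
  then show ?thesis
  proof cases
    case 1
    obtain Y where "models (B (individual j Y Ew''w)) = {w''}" "models (B (individual j Y Eww')) = {w}"
        "models (B (individual j Y E)) = {w''}"
      using SD_ranking[where X="{w''}" and i=j, OF SD distinct(2,1) distinct(3) Ew''w Eww' E']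
      by auto
    with 1 dT show ?thesis by auto
  next
    case 2
    obtain Y where "models (B (individual j Y E)) = T" "models (B (individual j Y Eww')) = {w'}"
        "models (B (individual j Y Ew''w)) = {w''}"
      using SD_ranking[where X=T and i=j, OF SD distinct(3) distinct(1)[symmetric] distinct(2)
          E' Eww'' Ew''w] 2
      by auto
    with 2 show ?thesis by auto
  next
    case 3
    obtain Y where "models (B (individual j Y E)) = T" "models (B (individual j Y Ew''w)) = {w''}"
        "models (B (individual j Y Eww')) = {w'}"
      using SD_ranking[where X=T and i=j, OF SD distinct(3)[symmetric] distinct(2)
          distinct(1)[symmetric] E Ew''w Eww''] 3
      by auto
    with 3 show ?thesis by auto
  qed
qed

lemma ESF_P_unanimous:
  assumes "ESF_P B nabla" "society N" "profile N \<Phi>" "x \<noteq> y"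
    and E: "models (B E) = {x, y}"
    and unanimous: "\<And>j. j \<in> N \<Longrightarrow> models (B (individual j (\<Phi> j) E)) = {x}"
  shows "models (B (nabla N \<Phi> E)) = {x}"
proof -
  obtain Ey where Ey: "models (B Ey) = {y}"
    using epistemic_space_models_surj[OF epistemic] by blast
  have "conj_consistent N (\<lambda>j. B (individual j (\<Phi> j) E))"
    using unanimous by (auto simp: conj_consistent_def models_def)
  moreover have "\<forall>j\<in>N. And (B (individual j (\<Phi> j) E)) (B Ey) \<turnstile> Bot"
    using unanimous Ey \<open>x \<noteq> y\<close> by (simp add: entails_Bot_iff)
  ultimately have "And (B (nabla N \<Phi> E)) (B Ey) \<turnstile> Bot"
    using assms(1-3) unfolding ESF_P_def by blast
  then have "models (B (nabla N \<Phi> E)) \<inter> {y} = {}"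
    using Ey by (simp add: entails_Bot_iff)
  then show ?thesis
    using fusion_models_pair_cases[OF assms(2,3) E] by auto
qed

lemma locally_decisive_outcome:
  assumes "locally_decisive B nabla N D E E'" "society N" "profile N \<Phi>" "x \<noteq> y"
    and E: "models (B E) = {x, y}" and E': "models (B E') = {y}"
    and inD: "\<And>j. j \<in> D \<Longrightarrow> models (B (individual j (\<Phi> j) E)) = {x}"
    and notD: "\<And>j. j \<in> N - D \<Longrightarrow> models (B (individual j (\<Phi> j) E)) = {y}"
  shows "models (B (nabla N \<Phi> E)) = {x}"
proof -
  have "conj_consistent D (\<lambda>j. B (individual j (\<Phi> j) E))"
    using inD by (auto simp: conj_consistent_def models_def)
  moreover have "\<forall>j\<in>D. And (B (individual j (\<Phi> j) E)) (B E') \<turnstile> Bot"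
    using inD E' \<open>x \<noteq> y\<close> by (simp add: entails_Bot_iff)
  moreover have "\<forall>j\<in>N - D. B (individual j (\<Phi> j) E) \<equiv>\<^sub>F B E'"
    using notD E' by (simp add: fequiv_def)
  ultimately have "And (B (nabla N \<Phi> E)) (B E') \<turnstile> Bot"
    using assms(1,3) unfolding locally_decisive_def by blast
  then have "models (B (nabla N \<Phi> E)) \<inter> {y} = {}"
    using E' by (simp add: entails_Bot_iff)
  then show ?thesis
    using fusion_models_pair_cases[OF assms(2,3) E] by auto
qed

lemma fusion_fequiv_constraint:
  assumes "society N" "profile N \<Phi>" "B E \<equiv>\<^sub>F B E'"
  shows "B (nabla N \<Phi> E) \<equiv>\<^sub>F B (nabla N \<Phi> E')"
proof -
  have "profile_equiv N \<Phi> N \<Phi>" by (simp add: profile_equiv_def)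
  then show ?thesis using basic assms unfolding ES_basic_fusion_def by blast
qed

lemma ind_models_eq_below_pair:
  assumes E: "models (B E) = {a, b}"
    and eq: "models (B (individual j X E)) = models (B (individual j Y E))"
    and below: "B E' \<turnstile> B E"
  shows "B (individual j X E') \<equiv>\<^sub>F B (individual j Y E')"
proof (cases "models (B E') = {a, b}")
  case True
  then have "B E' \<equiv>\<^sub>F B E" using E by (simp add: fequiv_def)
  then have "B (individual j Z E') \<equiv>\<^sub>F B (individual j Z E)" for Z
    using fusion_fequiv_constraint[OF society_singleton profile_single] by blast
  then show ?thesis using eq by (simp add: fequiv_def)
next
  case False
  then obtain x where "models (B E') = {x}"
    using below E models_nonempty[of E'] by (auto simp: entails_def)
  then show ?thesis
    using fusion_models_singleton[OF society_singleton profile_single] by (simp add: fequiv_def)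
qed

lemma ESF_I_pair:
  assumes "ESF_I B nabla" "society N" "profile N \<Phi>" "profile N \<Psi>"
    and E: "models (B E) = {a, b}"
    and eq: "\<And>j. j \<in> N \<Longrightarrow> models (B (individual j (\<Phi> j) E)) = models (B (individual j (\<Psi> j) E))"
  shows "models (B (nabla N \<Phi> E)) = models (B (nabla N \<Psi> E))"
proof -
  have "B (nabla N \<Phi> E) \<equiv>\<^sub>F B (nabla N \<Psi> E)"
    using assms(1-4) ind_models_eq_below_pair[OF E eq] unfolding ESF_I_def by blast
  then show ?thesis by (simp add: fequiv_def)
qed

end

theorem proposition15:
  fixes B :: "'e \<Rightarrow> 'p::finite form"
    and nabla :: "('s::wellorder, 'e) fusion"
    and N D :: "'s set"
    and w w' :: "'p set"
    and Eww' Ew' :: 'e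
  assumes "card (UNIV :: 'p set) \<ge> 2"
    and "epistemic_space B"
    and "ES_basic_fusion B nabla"
    and "ESF_SD B nabla" and "ESF_P B nabla" and "ESF_I B nabla"
    and "society N" and "D \<subseteq> N"
    and "w \<noteq> w'"
    and "models (B Eww') = {w, w'}"
    and "models (B Ew') = {w'}"
    and "locally_decisive B nabla N D Eww' Ew'"
  shows "\<forall>w'' E. w'' \<notin> {w, w'} \<and> models (B E) = {w', w''} \<longrightarrow>
           decisive B nabla N D E Ew'"
proof (intro allI impI)
  interpret es_fusion B nabla using assms(2,3) by unfold_locales
  fix w'' E
  assume "w'' \<notin> {w, w'} \<and> models (B E) = {w', w''}"
  then have distinct: "w'' \<noteq> w" "w'' \<noteq> w'" and E: "models (B E) = {w', w''}" by auto
  obtain Ew''w where Ew''w: "models (B Ew''w) = {w'', w}"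
    using epistemic_space_models_surj[OF assms(2), of "{w'', w}"] by auto
  show "decisive B nabla N D E Ew'"
    unfolding decisive_def
  proof (intro allI impI)
    fix \<Phi>
    assume \<Phi>: "profile N \<Phi> \<and> (\<forall>i\<in>D. And (B (individual i (\<Phi> i) E)) (B Ew') \<turnstile> Bot) \<and>
      conj_consistent D (\<lambda>i. B (individual i (\<Phi> i) E))"
    have outcome_cases: "models (B (individual j (\<Phi> j) E)) \<in> {{w'}, {w''}, {w', w''}}" for j
      using fusion_models_pair_cases[OF society_singleton profile_single E] .
    have inD: "models (B (individual j (\<Phi> j) E)) = {w''}" if "j \<in> D" for j
      using outcome_cases[of j] \<Phi> that assms(11) by (auto simp: entails_Bot_iff)
    have extension: "\<forall>j\<in>N. \<exists>Y. models (B (individual j Y E)) = models (B (individual j (\<Phi> j) E)) \<and>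
        models (B (individual j Y Ew''w)) = {w''} \<and>
        models (B (individual j Y Eww')) = (if j \<in> D then {w} else {w'})"
      by (intro ballI SD_agent_extension[OF assms(4,9) distinct E assms(10) Ew''w outcome_cases inD])
    obtain \<Phi>' where \<Phi>': "profile N \<Phi>'" and "\<forall>j\<in>N.
        models (B (individual j (\<Phi>' j) E)) = models (B (individual j (\<Phi> j) E)) \<and>
        models (B (individual j (\<Phi>' j) Ew''w)) = {w''} \<and>
        models (B (individual j (\<Phi>' j) Eww')) = (if j \<in> D then {w} else {w'})"
      using profile_choice[OF extension] by blast
    then have same: "\<And>j. j \<in> N \<Longrightarrow> models (B (individual j (\<Phi> j) E)) = models (B (individual j (\<Phi>' j) E))"
      and Pareto: "\<And>j. j \<in> N \<Longrightarrow> models (B (individual j (\<Phi>' j) Ew''w)) = {w''}"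
      and ranks: "\<And>j. j \<in> D \<Longrightarrow> models (B (individual j (\<Phi>' j) Eww')) = {w}"
        "\<And>j. j \<in> N - D \<Longrightarrow> models (B (individual j (\<Phi>' j) Eww')) = {w'}"
      using assms(8) by auto
    have "models (B (nabla N \<Phi>' Eww')) = {w}"
      using locally_decisive_outcome[OF assms(12,7) \<Phi>' assms(9,10,11) ranks] .
    moreover have "models (B (nabla N \<Phi>' Ew''w)) = {w''}"
      using ESF_P_unanimous[OF assms(5,7) \<Phi>' distinct(1) Ew''w Pareto] .
    ultimately have "models (B (nabla N \<Phi>' E)) = {w''}"
      using fusion_models_transitive[OF assms(7) \<Phi>' distinct(1) assms(9) distinct(2) Ew''w
          assms(10)] E by (simp add: insert_commute)
    moreover have "models (B (nabla N \<Phi> E)) = models (B (nabla N \<Phi>' E))"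
      using ESF_I_pair[OF assms(6,7) _ \<Phi>' E same] \<Phi> by blast
    ultimately show "And (B (nabla N \<Phi> E)) (B Ew') \<turnstile> Bot"
      using assms(11) distinct by (simp add: entails_Bot_iff)
  qed
qed

end
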